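(* For every $n\in\mathbb{N}$ and every $\pi\in\mathfrak{S}_n$, $\operatorname{EV}(\Theta(\pi))=\operatorname{Des}(\pi)$.
   Context: For a word $\pi=a_1\cdots a_n$ with distinct positive integer letters, $\operatorname{Des}(\pi)=\{i\in[n-1]:a_i>a_{i+1}\}$. The increasing unordered tree $T'(\pi)$ has root labeled $0$ and vertices $a_1,\dots,a_n$: if $b$ is a right-to-left minimum of $\pi$ then $b$ is a child of the root; otherwise $b$ is a child of the leftmost letter $a$ to the right of $b$ with $a<b$. $\operatorname{EV}(\pi)$ is the set of indices $1\le i\le n$ such that $a_i$ has even height in $T'(\pi)$ (root at height $0$). The complement $\pi^c=b_1\cdots b_n$ is the word on the same letters with $a_i<a_j\iff b_i>b_j$ for all $i<j$. $\Theta$ is defined recursively: the empty word maps to itself, and if $\pi=\sigma m\tau$ with $m$ the smallest letter, $\Theta(\pi)=\Theta(\sigma^c)\,m\,\Theta(\tau)$. *)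

theory Defs
  imports Main
begin

text \<open>Words are lists of distinct positive integers; positions are 1-based.\<close>

definition Des :: "nat list \<Rightarrow> nat set" where
  "Des w = {i \<in> {1..<length w}. w ! (i - 1) > w ! i}"

text \<open>hts w ! k is the height (root 0) in T'(w) of the letter at 0-based position k.
 A letter b with suffix t to its right: if no letter of t is smaller than b, b is a
 right-to-left minimum and a child of the root (height 1); otherwise its parent is the
 leftmost letter of t smaller than b. The heights of letters in t depend only on t.\<close>
fun hts :: "nat list \<Rightarrow> nat list" where
  "hts [] = []"
| "hts (b # t) = (let h = hts t in
     (case find (\<lambda>j. t ! j < b) [0..<length t] of
        None \<Rightarrow> 1
      | Some j \<Rightarrow> Suc (h ! j)) # h)"

definition EV :: "nat list \<Rightarrow> nat set" where
  "EV w = {i \<in> {1..length w}. even (hts w ! (i - 1))}"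

text \<open>0-based position of the first occurrence of a in a list (length if absent).\<close>
fun idx :: "nat list \<Rightarrow> nat \<Rightarrow> nat" where
  "idx [] a = 0"
| "idx (x # xs) a = (if x = a then 0 else Suc (idx xs a))"

lemma idx_less: "a \<in> set xs \<Longrightarrow> idx xs a < length xs"
  by (induction xs) auto

text \<open>Complement: same letters, order reversed (letter of rank r replaced by the letter of
 rank length - 1 - r).\<close>
definition compl_word :: "nat list \<Rightarrow> nat list" where
  "compl_word w = (let s = sort w in map (\<lambda>a. s ! (length w - 1 - idx s a)) w)"

lemma length_compl_word[simp]: "length (compl_word w) = length w"
  by (simp add: compl_word_def Let_def)

function Theta :: "nat list \<Rightarrow> nat list" where
  "Theta w = (if w = [] then [] else
     (let m = Min (set w); k = idx w m in
        Theta (compl_word (take k w)) @ [m] @ Theta (drop (Suc k) w)))"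
  by pat_completeness auto
termination
proof (relation "measure length")
  fix w :: "nat list" and m k
  assume "\<not> w = []" "m = Min (set w)" "k = idx w m"
  then have "k < length w" by (simp add: idx_less)
  then show "(compl_word (take k w), w) \<in> measure length" by simp
next
  fix w :: "nat list" and m k
  assume "\<not> w = []"
  then show "(drop (Suc k) w, w) \<in> measure length" by simp
qed auto

end

theory Submission
  imports Defs
begin

text \<open>Write \<pi> = \<sigma> m \<tau> with m the smallest letter, so that \<Theta>(\<pi>) = A m B with
  A = \<Theta>(\<sigma>^c) and B = \<Theta>(\<tau>). In T'(A m B) the letter m hangs from the root and
  every letter of A sits one level deeper than in T'(A), while B keeps its heights.
  Hence on the first |\<sigma>| positions EV(\<Theta>(\<pi>)) is the complement of
  EV(A) = Des(\<sigma>^c), the ascent set of \<sigma>; together with position |\<sigma>| this is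
  exactly Des(\<pi>) there; on the positions of B both sides are the shifted sets
  EV(B) = Des(\<tau>). Position |\<sigma>| + 1 (the letter m) lies in neither set.\<close>

declare Theta.simps [simp del]

lemma idx_append_Cons: "m \<notin> set \<sigma> \<Longrightarrow> idx (\<sigma> @ m # \<tau>) m = length \<sigma>"
  by (induction \<sigma>) auto

lemma idx_nth: "a \<in> set xs \<Longrightarrow> xs ! idx xs a = a"
  by (induction xs) auto

lemma sorted_distinct_nth_less_iff:
  assumes "sorted s" "distinct s" "i < length s" "j < length s"
  shows "s ! i < s ! j \<longleftrightarrow> i < j"
  using assms sorted_wrt_nth_less[of "(<)" s] strict_sorted_iff[of s]
  by (metis less_asym linorder_neqE_nat)

lemma compl_word_less_iff:
  assumes "distinct w" "i < length w" "j < length w"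
  shows "compl_word w ! i < compl_word w ! j \<longleftrightarrow> w ! j < w ! i"
proof -
  define s where "s = sort w"
  define p where "p = idx s (w ! i)"
  define q where "q = idx s (w ! j)"
  have s: "sorted s" "distinct s" "length s = length w" "set s = set w"
    using assms(1) by (simp_all add: s_def)
  have p: "p < length w" "s ! p = w ! i"
    using s assms(2) idx_less[of "w ! i" s] idx_nth[of "w ! i" s] by (simp_all add: p_def)
  have q: "q < length w" "s ! q = w ! j"
    using s assms(3) idx_less[of "w ! j" s] idx_nth[of "w ! j" s] by (simp_all add: q_def)
  have "compl_word w ! i < compl_word w ! j \<longleftrightarrow> s ! (length w - 1 - p) < s ! (length w - 1 - q)"
    using assms by (simp add: compl_word_def Let_def s_def p_def q_def)
  also have "\<dots> \<longleftrightarrow> q < p"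
    using s p q by (subst sorted_distinct_nth_less_iff) auto
  also have "\<dots> \<longleftrightarrow> w ! j < w ! i"
    using s p q sorted_distinct_nth_less_iff[of s q p] by simp
  finally show ?thesis .
qed

lemma distinct_compl_word:
  assumes "distinct w"
  shows "distinct (compl_word w)"
  unfolding distinct_conv_nth
proof (intro allI impI)
  fix i j
  assume ij: "i < length (compl_word w)" "j < length (compl_word w)" "i \<noteq> j"
  then have "w ! i \<noteq> w ! j"
    using assms by (simp add: nth_eq_iff_index_eq)
  then have "w ! i < w ! j \<or> w ! j < w ! i"
    by (simp add: neq_iff)
  then show "compl_word w ! i \<noteq> compl_word w ! j"
    using compl_word_less_iff[OF assms, of i j] compl_word_less_iff[OF assms, of j i] ij by auto
qed

lemma Des_compl_word:
  assumes "distinct w"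
  shows "Des (compl_word w) = {1..<length w} - Des w"
proof -
  have "compl_word w ! (i - 1) > compl_word w ! i \<longleftrightarrow> \<not> w ! (i - 1) > w ! i"
    if "i \<in> {1..<length w}" for i
  proof -
    have "i - 1 < length w" "i < length w" "w ! (i - 1) \<noteq> w ! i"
      using that assms by (auto simp: nth_eq_iff_index_eq)
    then show ?thesis
      using compl_word_less_iff[OF assms, of i "i - 1"] by auto
  qed
  then show ?thesis
    by (auto simp: Des_def)
qed

lemma set_compl_word_subset: "set (compl_word w) \<subseteq> set w"
proof
  fix x assume "x \<in> set (compl_word w)"
  then obtain a where "a \<in> set w" and x: "x = sort w ! (length w - 1 - idx (sort w) a)"
    by (auto simp: compl_word_def Let_def)
  then have "length w - 1 - idx (sort w) a < length (sort w)" by (cases w) auto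
  then show "x \<in> set w" unfolding x using nth_mem set_sort by metis
qed

lemma Theta_Nil [simp]: "Theta [] = []"
  by (simp add: Theta.simps)

lemma Theta_append_Cons:
  assumes "m \<notin> set \<sigma>" and "\<forall>x \<in> set \<sigma> \<union> set \<tau>. m \<le> x"
  shows "Theta (\<sigma> @ m # \<tau>) = Theta (compl_word \<sigma>) @ m # Theta \<tau>"
proof -
  have "Min (set (\<sigma> @ m # \<tau>)) = m"
    using assms(2) by (intro Min_eqI) auto
  then show ?thesis
    by (subst Theta.simps) (simp add: Let_def idx_append_Cons[OF assms(1)])
qed

lemma Theta_induct [case_names Nil append_Cons]:
  assumes "P []"
    and "\<And>\<sigma> m \<tau>. m \<notin> set \<sigma> \<Longrightarrow> \<forall>x \<in> set \<sigma> \<union> set \<tau>. m \<le> x \<Longrightarrow>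
           P (compl_word \<sigma>) \<Longrightarrow> P \<tau> \<Longrightarrow> P (\<sigma> @ m # \<tau>)"
  shows "P w"
proof (induction w rule: length_induct)
  case (1 w)
  show ?case
  proof (cases "w = []")
    case True
    then show ?thesis using assms(1) by simp
  next
    case False
    define m where "m = Min (set w)"
    have "m \<in> set w" and m_le: "\<forall>x \<in> set w. m \<le> x"
      using False by (simp_all add: m_def)
    then obtain \<sigma> \<tau> where w: "w = \<sigma> @ m # \<tau>" and "m \<notin> set \<sigma>"
      using split_list_first by metis
    moreover have "\<forall>x \<in> set \<sigma> \<union> set \<tau>. m \<le> x"
      using m_le w by simp
    moreover have "P (compl_word \<sigma>)" "P \<tau>"
      using "1.IH" arg_cong[OF w, of length] by simp_all
    ultimately show ?thesis
      using assms(2) by metis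
  qed
qed

lemma length_Theta [simp]: "length (Theta w) = length w"
  by (induction w rule: Theta_induct) (simp_all add: Theta_append_Cons)

lemma set_Theta_subset: "set (Theta w) \<subseteq> set w"
  by (induction w rule: Theta_induct)
    (auto simp: Theta_append_Cons dest: set_compl_word_subset[THEN subsetD])

lemma length_hts [simp]: "length (hts w) = length w"
  by (induction w) (auto simp: Let_def)

lemma hts_Cons_min:
  assumes "\<forall>x \<in> set B. m < x"
  shows "hts (m # B) = 1 # hts B"
proof -
  have "find (\<lambda>j. B ! j < m) [0..<length B] = None"
    using assms by (auto simp: find_None_iff) (meson nth_mem order.asym)
  then show ?thesis
    by (simp add: Let_def)
qed

lemma hts_append_Cons_min:
  assumes "\<forall>x \<in> set A \<union> set B. m < x"
  shows "hts (A @ m # B) = map Suc (hts A) @ 1 # hts B"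
  using assms
proof (induction A)
  case Nil
  then show ?case by (simp add: hts_Cons_min del: hts.simps(2))
next
  case (Cons a A)
  define C where "C = A @ m # B"
  have C: "length A < length C"
    "\<And>j. j < length A \<Longrightarrow> C ! j = A ! j" "C ! length A = m"
    by (simp_all add: C_def nth_append)
  have IH: "hts C = map Suc (hts A) @ 1 # hts B" and "m < a"
    using Cons by (simp_all add: C_def)
  show ?case
  proof (cases "find (\<lambda>j. A ! j < a) [0..<length A]")
    case (Some j)
    then have "find (\<lambda>j. C ! j < a) [0..<length C] = Some j" and "j < length A"
      using C by (auto simp: find_Some_iff intro!: exI[of _ j])
    then show ?thesis
      using IH Some by (simp add: C_def[symmetric] Let_def nth_append)
  next
    case None
    then have "find (\<lambda>j. C ! j < a) [0..<length C] = Some (length A)"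
      using C \<open>m < a\<close> by (auto simp: find_Some_iff find_None_iff intro!: exI[of _ "length A"])
    then show ?thesis
      using IH None by (simp add: C_def[symmetric] Let_def nth_append)
  qed
qed

lemma mem_add_image_iff: "(i::nat) \<in> (+) c ` S \<longleftrightarrow> c \<le> i \<and> i - c \<in> S"
  by (auto simp: image_iff intro: bexI[of _ "i - c"])

lemma EV_append_Cons_min:
  assumes "\<forall>x \<in> set A \<union> set B. m < x"
  shows "EV (A @ m # B) = ({1..length A} - EV A) \<union> (+) (Suc (length A)) ` EV B"
proof (rule set_eqI)
  fix i
  have hts: "hts (A @ m # B) = map Suc (hts A) @ 1 # hts B"
    using assms by (rule hts_append_Cons_min)
  show "i \<in> EV (A @ m # B) \<longleftrightarrow> i \<in> ({1..length A} - EV A) \<union> (+) (Suc (length A)) ` EV B"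
  proof (cases "i \<le> length A")
    case True
    have "hts (A @ m # B) ! (i - 1) = Suc (hts A ! (i - 1))" if "1 \<le> i"
    proof -
      have "i - 1 < length A" using that True by linarith
      then show ?thesis by (simp add: hts nth_append)
    qed
    then show ?thesis
      using True by (simp only: Un_iff mem_add_image_iff) (auto simp: EV_def)
  next
    case False
    then have "length A \<le> i - 1" by linarith
    then have "hts (A @ m # B) ! (i - 1) = (1 # hts B) ! (i - Suc (length A))"
      by (simp add: hts nth_append)
    then show ?thesis
      using False by (simp only: Un_iff mem_add_image_iff) (cases "i - Suc (length A)"; auto simp: EV_def)
  qed
qed

lemma Des_append_Cons_min:
  assumes "\<forall>x \<in> set \<sigma> \<union> set \<tau>. m < x"
  shows "Des (\<sigma> @ m # \<tau>) = insert (length \<sigma>) (Des \<sigma>) - {0} \<union> (+) (Suc (length \<sigma>)) ` Des \<tau>"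
proof (rule set_eqI)
  fix i
  let ?w = "\<sigma> @ m # \<tau>"
  show "i \<in> Des ?w \<longleftrightarrow> i \<in> insert (length \<sigma>) (Des \<sigma>) - {0} \<union> (+) (Suc (length \<sigma>)) ` Des \<tau>"
  proof (cases "i < length \<sigma>")
    case True
    then show ?thesis
      by (simp only: Un_iff mem_add_image_iff) (auto simp: Des_def nth_append)
  next
    case False
    then consider "i = length \<sigma>" | "i = Suc (length \<sigma>)" | "Suc (length \<sigma>) < i"
      by linarith
    then show ?thesis
    proof cases
      case 1
      then show ?thesis
        using assms by (simp only: Un_iff mem_add_image_iff) (auto simp: Des_def nth_append)
    next
      case 2
      have "m < \<tau> ! 0" if "\<tau> \<noteq> []"
        using assms that hd_in_set[of \<tau>] by (simp add: hd_conv_nth)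
      then show ?thesis
        using 2 by (simp only: Un_iff mem_add_image_iff) (auto simp: Des_def nth_append)
    next
      case 3
      then obtain j where j: "i = Suc (Suc (length \<sigma>) + j)"
        using less_imp_Suc_add by blast
      then have "?w ! (i - 1) = \<tau> ! j" "?w ! i = \<tau> ! Suc j"
        by (simp_all add: nth_append)
      then show ?thesis
        using j by (simp only: Un_iff mem_add_image_iff) (auto simp: Des_def)
    qed
  qed
qed

lemma EV_Theta:
  assumes "distinct w"
  shows "EV (Theta w) = Des w"
  using assms
proof (induction w rule: Theta_induct)
  case Nil
  show ?case by (simp add: EV_def Des_def)
next
  case (append_Cons \<sigma> m \<tau>)
  have "distinct \<sigma>" "distinct \<tau>" and above: "\<forall>x \<in> set \<sigma> \<union> set \<tau>. m < x"
    using append_Cons.prems append_Cons.hyps(2) by (auto simp: le_less)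
  have IH: "EV (Theta (compl_word \<sigma>)) = {1..<length \<sigma>} - Des \<sigma>" "EV (Theta \<tau>) = Des \<tau>"
    using append_Cons.IH distinct_compl_word[OF \<open>distinct \<sigma>\<close>] Des_compl_word[OF \<open>distinct \<sigma>\<close>]
      \<open>distinct \<tau>\<close> by simp_all
  have "\<forall>x \<in> set (Theta (compl_word \<sigma>)) \<union> set (Theta \<tau>). m < x"
    using above set_Theta_subset set_compl_word_subset by blast
  then have "EV (Theta (\<sigma> @ m # \<tau>)) =
      ({1..length \<sigma>} - ({1..<length \<sigma>} - Des \<sigma>)) \<union> (+) (Suc (length \<sigma>)) ` Des \<tau>"
    by (simp add: Theta_append_Cons append_Cons.hyps EV_append_Cons_min IH)
  also have "{1..length \<sigma>} - ({1..<length \<sigma>} - Des \<sigma>) = insert (length \<sigma>) (Des \<sigma>) - {0}"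
    by (auto simp: Des_def Suc_le_eq)
  also have "\<dots> \<union> (+) (Suc (length \<sigma>)) ` Des \<tau> = Des (\<sigma> @ m # \<tau>)"
    using above by (rule Des_append_Cons_min[symmetric])
  finally show ?case .
qed

theorem theorem8p1:
  fixes n :: nat and \<pi> :: "nat list"
  assumes "distinct \<pi>" and "set \<pi> = {1..n}"
  shows "EV (Theta \<pi>) = Des \<pi>"
  using assms(1) by (rule EV_Theta)

end
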